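(* Let $G$ be a countable directed graph and let $v_{1},v_{2},v_{3},v_{4}$ be mutually distinct vertices of $G$. Then the subsets $W^{*}(G)_{v_{1}}^{v_{2}}=L_{v_{1}}W^{*}(G)L_{v_{2}}$ and $W^{*}(G)_{v_{3}}^{v_{4}}=L_{v_{3}}W^{*}(G)L_{v_{4}}$ of $W^{*}(G)$ are free over $D_{G}$ in $(W^{*}(G),E)$.
   Context: $G$ is a countable directed graph with vertex set $V(G)$; $\mathbb{F}^{+}(G)$ is its free semigroupoid (all vertices and admissible finite paths). On $H_{G}=l^{2}(\mathbb{F}^{+}(G))$ with orthonormal basis $\{\xi_{w}\}$, $L_{w}\xi_{h}=\xi_{wh}$ if $wh\in\mathbb{F}^{+}(G)$ and $0$ otherwise; $L_{w}^{*}$ is its adjoint; $L_v$ ($v\in V(G)$) are projections. $W^{*}(G)$ is the weak-operator closure of the $*$-algebra generated by all $L_{w},L_{w}^{*}$; $D_{G}$ is the von Neumann subalgebra generated by the $L_{v}$. Each $a\in W^{*}(G)$ has Fourier expansion $a=\sum_{w\in\mathbb{F}^{+}(G:a),u_{w}\in\{1,*\}}p_{w}L_{w}^{u_{w}}$ ($p_w\neq0$) with $V(G:a)$ the set of vertices in the support. The conditional expectation $E:W^{*}(G)\to D_{G}$ is $E(a)=\sum_{v\in V(G:a)}p_{v}L_{v}$; "free over $D_G$" means free with amalgamation over $D_G$ with respect to $E$. *)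

theory Defs
  imports "HOL-Analysis.Analysis" "Graph_Theory.Digraph"
begin

text \<open>Elements of the free semigroupoid: vertices, or nonempty finite admissible
  edge lists. Convention: e1 e2 is admissible iff head e1 = tail e2
  (edge e = s(e) e r(e), with s = tail, r = head).\<close>

datatype ('v,'e) fpath = Vtx 'v | Edg "'e list"

definition FP :: "('v,'e) pre_digraph \<Rightarrow> ('v,'e) fpath set" where
  "FP G = {Vtx v | v. v \<in> verts G} \<union>
     {Edg es | es. es \<noteq> [] \<and> set es \<subseteq> arcs G \<and>
        (\<forall>i. Suc i < length es \<longrightarrow> head G (es ! i) = tail G (es ! Suc i))}"

fun pstart :: "('v,'e) pre_digraph \<Rightarrow> ('v,'e) fpath \<Rightarrow> 'v" where
  "pstart G (Vtx v) = v"
| "pstart G (Edg es) = tail G (hd es)"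

fun pend :: "('v,'e) pre_digraph \<Rightarrow> ('v,'e) fpath \<Rightarrow> 'v" where
  "pend G (Vtx v) = v"
| "pend G (Edg es) = head G (last es)"

text \<open>Product w h in the free semigroupoid (None = not admissible / empty word).\<close>
fun pmult :: "('v,'e) pre_digraph \<Rightarrow> ('v,'e) fpath \<Rightarrow> ('v,'e) fpath \<Rightarrow> ('v,'e) fpath option" where
  "pmult G (Vtx v) (Vtx u) = (if v = u then Some (Vtx v) else None)"
| "pmult G (Vtx v) (Edg fs) = (if v = tail G (hd fs) then Some (Edg fs) else None)"
| "pmult G (Edg es) (Vtx u) = (if head G (last es) = u then Some (Edg es) else None)"
| "pmult G (Edg es) (Edg fs) =
     (if head G (last es) = tail G (hd fs) then Some (Edg (es @ fs)) else None)"

type_synonym ('v,'e) vec = "('v,'e) fpath \<Rightarrow> complex"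
type_synonym ('v,'e) op = "('v,'e) vec \<Rightarrow> ('v,'e) vec"

definition l2 :: "('v,'e) pre_digraph \<Rightarrow> ('v,'e) vec set" where
  "l2 G = {f. (\<forall>x. x \<notin> FP G \<longrightarrow> f x = 0) \<and> (\<lambda>x. (cmod (f x))\<^sup>2) summable_on UNIV}"

definition linner :: "('v,'e) vec \<Rightarrow> ('v,'e) vec \<Rightarrow> complex" where
  "linner f g = infsum (\<lambda>x. f x * cnj (g x)) UNIV"

definition lnorm :: "('v,'e) vec \<Rightarrow> real" where
  "lnorm f = sqrt (infsum (\<lambda>x. (cmod (f x))\<^sup>2) UNIV)"

definition xi :: "('v,'e) fpath \<Rightarrow> ('v,'e) vec" where
  "xi w = (\<lambda>x. if x = w then 1 else 0)"

text \<open>Operators are represented as maps on all functions, normalised to vanish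
  outside l2; a bounded operator on l2 is one that is linear and bounded there.\<close>
definition is_op :: "('v,'e) pre_digraph \<Rightarrow> ('v,'e) op \<Rightarrow> bool" where
  "is_op G T \<longleftrightarrow>
     (\<forall>f. f \<notin> l2 G \<longrightarrow> T f = (\<lambda>x. 0)) \<and>
     (\<forall>f \<in> l2 G. T f \<in> l2 G) \<and>
     (\<forall>f \<in> l2 G. \<forall>g \<in> l2 G. T (\<lambda>x. f x + g x) = (\<lambda>x. T f x + T g x)) \<and>
     (\<forall>f \<in> l2 G. \<forall>c. T (\<lambda>x. c * f x) = (\<lambda>x. c * T f x)) \<and>
     (\<exists>C. \<forall>f \<in> l2 G. lnorm (T f) \<le> C * lnorm f)"

definition zero_op :: "('v,'e) op" where
  "zero_op = (\<lambda>f x. 0)"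

definition add_op :: "('v,'e) op \<Rightarrow> ('v,'e) op \<Rightarrow> ('v,'e) op" where
  "add_op A B = (\<lambda>f x. A f x + B f x)"

definition smul_op :: "complex \<Rightarrow> ('v,'e) op \<Rightarrow> ('v,'e) op" where
  "smul_op c A = (\<lambda>f x. c * A f x)"

text \<open>Hilbert space adjoint: (T* f)(x) = < T* f, xi_x > = < f, T xi_x >.\<close>
definition adj :: "('v,'e) pre_digraph \<Rightarrow> ('v,'e) op \<Rightarrow> ('v,'e) op" where
  "adj G T = (\<lambda>f x. if f \<in> l2 G \<and> x \<in> FP G then linner f (T (xi x)) else 0)"

text \<open>Creation operator L_w: L_w xi_h = xi_{wh} if wh is in F+(G), 0 otherwise.\<close>
definition Lop :: "('v,'e) pre_digraph \<Rightarrow> ('v,'e) fpath \<Rightarrow> ('v,'e) op" where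
  "Lop G w = (\<lambda>f x.
     if f \<in> l2 G \<and> x \<in> FP G \<and> (\<exists>h \<in> FP G. pmult G w h = Some x)
     then f (THE h. h \<in> FP G \<and> pmult G w h = Some x) else 0)"

inductive_set star_alg :: "('v,'e) pre_digraph \<Rightarrow> ('v,'e) op set \<Rightarrow> ('v,'e) op set"
  for G :: "('v,'e) pre_digraph" and X :: "('v,'e) op set" where
  gen: "A \<in> X \<Longrightarrow> A \<in> star_alg G X"
| add: "A \<in> star_alg G X \<Longrightarrow> B \<in> star_alg G X \<Longrightarrow> add_op A B \<in> star_alg G X"
| smul: "A \<in> star_alg G X \<Longrightarrow> smul_op c A \<in> star_alg G X"
| mult: "A \<in> star_alg G X \<Longrightarrow> B \<in> star_alg G X \<Longrightarrow> A \<circ> B \<in> star_alg G X"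
| star: "A \<in> star_alg G X \<Longrightarrow> adj G A \<in> star_alg G X"

definition wot_closure :: "('v,'e) pre_digraph \<Rightarrow> ('v,'e) op set \<Rightarrow> ('v,'e) op set" where
  "wot_closure G S = {T. is_op G T \<and>
     (\<forall>F. finite F \<longrightarrow> F \<subseteq> l2 G \<times> l2 G \<longrightarrow>
        (\<forall>\<epsilon>>0. \<exists>A \<in> S. \<forall>(f,g) \<in> F. cmod (linner (T f) g - linner (A f) g) < \<epsilon>))}"

definition vertex_ops :: "('v,'e) pre_digraph \<Rightarrow> ('v,'e) op set" where
  "vertex_ops G = {Lop G (Vtx v) | v. v \<in> verts G}"

definition Wstar :: "('v,'e) pre_digraph \<Rightarrow> ('v,'e) op set" where
  "Wstar G = wot_closure G (star_alg G {Lop G w | w. w \<in> FP G})"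

definition DG :: "('v,'e) pre_digraph \<Rightarrow> ('v,'e) op set" where
  "DG G = wot_closure G (star_alg G (vertex_ops G))"

definition gen_DG :: "('v,'e) pre_digraph \<Rightarrow> ('v,'e) op set \<Rightarrow> ('v,'e) op set" where
  "gen_DG G X = wot_closure G (star_alg G (vertex_ops G \<union> X))"

text \<open>Conditional expectation E(a) = sum over vertices v of p_v L_v, where the
  vertex Fourier coefficient is p_v = < a xi_v, xi_v >.\<close>
definition condE :: "('v,'e) pre_digraph \<Rightarrow> ('v,'e) op \<Rightarrow> ('v,'e) op" where
  "condE G a = (\<lambda>f x. if f \<in> l2 G \<and> x \<in> FP G
      then linner (a (xi (Vtx (pstart G x)))) (xi (Vtx (pstart G x))) * f x else 0)"

definition corner :: "('v,'e) pre_digraph \<Rightarrow> 'v \<Rightarrow> 'v \<Rightarrow> ('v,'e) op set" where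
  "corner G v1 v2 = {Lop G (Vtx v1) \<circ> a \<circ> Lop G (Vtx v2) | a. a \<in> Wstar G}"

text \<open>Two subsets X1, X2 are free over D_G (w.r.t. E) iff the D_G-algebras they
  generate are free with amalgamation: every alternating product of centred
  elements has zero expectation.\<close>
definition free_over_DG :: "('v,'e) pre_digraph \<Rightarrow> ('v,'e) op set \<Rightarrow> ('v,'e) op set \<Rightarrow> bool" where
  "free_over_DG G X1 X2 \<longleftrightarrow>
     (\<forall>xs :: (bool \<times> ('v,'e) op) list.
        xs \<noteq> [] \<longrightarrow>
        (\<forall>i. Suc i < length xs \<longrightarrow> fst (xs ! i) \<noteq> fst (xs ! Suc i)) \<longrightarrow>
        (\<forall>(b, a) \<in> set xs. a \<in> gen_DG G (if b then X1 else X2) \<and> condE G a = zero_op) \<longrightarrow>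
        condE G (foldr (\<circ>) (map snd xs) id) = zero_op)"

end

theory Submission
  imports Defs
begin

(* For a vertex set S containing v1 and v2 let M_S be the closed span of the xi_x whose path x
   starts in S. Every element of the *-algebra generated by D_G and L_v1 W*(G) L_v2 leaves M_S
   invariant and multiplies each remaining xi_x by a scalar that depends only on the start vertex
   of x: this holds for the generators, since L_v1 a L_v2 maps into M_S and vanishes on its
   complement, and it survives sums, products and adjoints.

   Matrix entries pass to weak-operator limits. Hence a centred element a of the first algebra
   maps xi_u into M_{v1,v2}, its xi_u-coefficient being the u-coefficient of E(a) = 0, while a
   centred element b of the second algebra annihilates the complement of M_{v3,v4}, because the
   scalars of its approximants are close to the vertex coefficients of E(b) = 0. For disjoint
   pairs the last two factors of an alternating product of centred elements therefore kill every
   xi_u, and the expectation of the product, which only sees the entries <P xi_u, xi_u>, is 0. *)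

lemma norm_less_all_multiples_imp_zero:
  fixes z :: "'a :: real_normed_vector"
  assumes "M > 0" "\<And>e. e > 0 \<Longrightarrow> norm z < e * M"
  shows "z = 0"
proof (rule ccontr)
  assume "z \<noteq> 0"
  then have "norm z / M > 0" using assms(1) by simp
  from assms(2)[OF this] show False using assms(1) by simp
qed

lemma infsum_if_eq: "infsum (\<lambda>y. if y = w then (c::complex) else 0) UNIV = c"
proof -
  have "infsum (\<lambda>y. if y = w then c else 0) UNIV = infsum (\<lambda>y. if y = w then c else 0) {w}"
    by (rule infsum_cong_neutral) auto
  then show ?thesis by simp
qed

lemma linner_scaled_xi: "linner f (\<lambda>y. c * xi w y) = f w * cnj c"
proof -
  have "linner f (\<lambda>y. c * xi w y) = infsum (\<lambda>y. if y = w then f w * cnj c else 0) UNIV"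
    unfolding linner_def xi_def by (rule infsum_cong) auto
  then show ?thesis by (simp add: infsum_if_eq)
qed

lemma linner_xi [simp]: "linner f (xi w) = f w"
  using linner_scaled_xi[of f 1 w] by simp

lemma linner_eq_zero: "(\<And>y. f y = 0 \<or> g y = 0) \<Longrightarrow> linner f g = 0"
  unfolding linner_def by (rule infsum_0) (metis complex_cnj_zero mult_zero_left mult_zero_right)

lemma l2_vanishes_outside: "f \<in> l2 G \<Longrightarrow> x \<notin> FP G \<Longrightarrow> f x = 0"
  unfolding l2_def by auto

lemma zero_in_l2: "(\<lambda>x. 0) \<in> l2 G"
  unfolding l2_def by auto

lemma xi_in_l2: "w \<in> FP G \<Longrightarrow> xi w \<in> l2 G"
proof -
  assume w: "w \<in> FP G"
  have "(\<lambda>x. (cmod (xi w x))\<^sup>2) summable_on UNIV \<longleftrightarrow> (\<lambda>x. (cmod (xi w x))\<^sup>2) summable_on {w}"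
    by (rule summable_on_cong_neutral) (auto simp: xi_def)
  then show ?thesis using w unfolding l2_def by (auto simp: xi_def)
qed

lemma bounded_mult_in_l2:
  assumes f: "f \<in> l2 G" and K: "\<And>x. cmod (c x) \<le> K"
  shows "(\<lambda>x. c x * f x) \<in> l2 G"
proof -
  have "(\<lambda>x. (cmod (f x))\<^sup>2) summable_on UNIV" using f unfolding l2_def by auto
  then have "(\<lambda>x. K\<^sup>2 * (cmod (f x))\<^sup>2) summable_on UNIV" by (rule summable_on_cmult_right)
  moreover have "(cmod (c x * f x))\<^sup>2 \<le> K\<^sup>2 * (cmod (f x))\<^sup>2" for x
  proof -
    have "cmod (c x * f x) \<le> K * cmod (f x)" using K[of x] by (simp add: norm_mult mult_right_mono)
    then have "(cmod (c x * f x))\<^sup>2 \<le> (K * cmod (f x))\<^sup>2" by (simp add: power_mono)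
    then show ?thesis by (simp add: power_mult_distrib)
  qed
  ultimately have "(\<lambda>x. (cmod (c x * f x))\<^sup>2) summable_on UNIV"
    by (rule summable_on_comparison_test) auto
  then show ?thesis using f unfolding l2_def by auto
qed

lemma is_op_zero:
  assumes "is_op G T" shows "T (\<lambda>x. 0) = (\<lambda>x. 0)"
proof -
  have "\<forall>f\<in>l2 G. \<forall>c. T (\<lambda>x. c * f x) = (\<lambda>x. c * T f x)"
    using assms unfolding is_op_def by blast
  from this[rule_format, OF zero_in_l2, of 0] show ?thesis by simp
qed

lemma is_op_vanishes_outside:
  assumes "is_op G T" "x \<notin> FP G" shows "T f x = 0"
proof (cases "f \<in> l2 G")
  case True
  then show ?thesis using assms l2_vanishes_outside unfolding is_op_def by blast
qed (use assms in \<open>simp add: is_op_def\<close>)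

lemma Vtx_in_FP: "v \<in> verts G \<Longrightarrow> Vtx v \<in> FP G"
  unfolding FP_def by auto

lemma pstart_in_verts: "wf_digraph G \<Longrightarrow> x \<in> FP G \<Longrightarrow> pstart G x \<in> verts G"
  unfolding FP_def by (auto intro!: wf_digraph.tail_in_verts hd_in_set)

lemma pmult_Vtx_eq_Some_iff: "pmult G (Vtx v) h = Some x \<longleftrightarrow> h = x \<and> pstart G h = v"
  by (cases h) auto

lemma Lop_Vtx: "Lop G (Vtx v) f = (\<lambda>x. if f \<in> l2 G \<and> x \<in> FP G \<and> pstart G x = v then f x else 0)"
proof -
  have "(THE h. h \<in> FP G \<and> pmult G (Vtx v) h = Some x) = x" if "x \<in> FP G" "pstart G x = v" for x
    using that by (auto simp: pmult_Vtx_eq_Some_iff)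
  then show ?thesis unfolding Lop_def by (auto simp: pmult_Vtx_eq_Some_iff intro!: ext)
qed

section \<open>Operators that are diagonal off the paths starting in a vertex set\<close>

definition start_supported :: "('v,'e) pre_digraph \<Rightarrow> 'v set \<Rightarrow> ('v,'e) vec \<Rightarrow> bool" where
  "start_supported G S f \<longleftrightarrow> (\<forall>x. x \<notin> FP G \<or> pstart G x \<notin> S \<longrightarrow> f x = 0)"

definition diagonal_off :: "('v,'e) pre_digraph \<Rightarrow> 'v set \<Rightarrow> ('v \<Rightarrow> complex) \<Rightarrow> ('v,'e) op \<Rightarrow> bool" where
  "diagonal_off G S c A \<longleftrightarrow>
     (\<forall>f \<in> l2 G. (\<forall>x. pstart G x \<in> S \<longrightarrow> f x = 0) \<longrightarrow> A f = (\<lambda>x. c (pstart G x) * f x))"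

definition block_diagonal :: "('v,'e) pre_digraph \<Rightarrow> 'v set \<Rightarrow> ('v,'e) op \<Rightarrow> bool" where
  "block_diagonal G S A \<longleftrightarrow>
     (\<forall>f. start_supported G S f \<longrightarrow> start_supported G S (A f)) \<and>
     (\<exists>c K. (\<forall>w. cmod (c w) \<le> K) \<and> diagonal_off G S c A)"

lemma block_diagonalI:
  assumes "\<And>f. start_supported G S f \<Longrightarrow> start_supported G S (A f)"
    and "\<And>w. cmod (c w) \<le> K" and "diagonal_off G S c A"
  shows "block_diagonal G S A"
  using assms unfolding block_diagonal_def by blast

lemma block_diagonalE:
  assumes "block_diagonal G S A"
  obtains c K where "\<And>w. cmod (c w) \<le> K" "diagonal_off G S c A"
  using assms unfolding block_diagonal_def by blast

lemma block_diagonal_start_supported: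
  "block_diagonal G S A \<Longrightarrow> start_supported G S f \<Longrightarrow> start_supported G S (A f)"
  unfolding block_diagonal_def by blast

lemma diagonal_offD:
  "diagonal_off G S c A \<Longrightarrow> f \<in> l2 G \<Longrightarrow> (\<And>x. pstart G x \<in> S \<Longrightarrow> f x = 0) \<Longrightarrow>
    A f = (\<lambda>x. c (pstart G x) * f x)"
  unfolding diagonal_off_def by blast

lemma diagonal_off_xi:
  assumes "diagonal_off G S c A" "x \<in> FP G" "pstart G x \<notin> S"
  shows "A (xi x) = (\<lambda>y. c (pstart G x) * xi x y)"
proof -
  have "A (xi x) = (\<lambda>y. c (pstart G y) * xi x y)"
    by (rule diagonal_offD[OF assms(1) xi_in_l2[OF assms(2)]]) (use assms(3) in \<open>auto simp: xi_def\<close>)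
  then show ?thesis by (auto simp: xi_def)
qed

lemma start_supported_xi: "x \<in> FP G \<Longrightarrow> pstart G x \<in> S \<Longrightarrow> start_supported G S (xi x)"
  unfolding start_supported_def xi_def by auto

lemma block_diagonal_vertex_op: "block_diagonal G S (Lop G (Vtx v))"
proof (rule block_diagonalI[where c = "\<lambda>w. if w = v then 1 else 0" and K = 1])
  show "start_supported G S (Lop G (Vtx v) f)" if "start_supported G S f" for f
    using that unfolding start_supported_def Lop_Vtx by auto
  show "diagonal_off G S (\<lambda>w. if w = v then 1 else 0) (Lop G (Vtx v))"
    unfolding diagonal_off_def Lop_Vtx by (auto intro!: ext simp: l2_vanishes_outside)
qed simp

lemma block_diagonal_corner_op:
  assumes "is_op G a" "v1 \<in> S" "v2 \<in> S"
  shows "block_diagonal G S (Lop G (Vtx v1) \<circ> a \<circ> Lop G (Vtx v2))"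
proof (rule block_diagonalI[where c = "\<lambda>w. 0" and K = 0])
  show "start_supported G S ((Lop G (Vtx v1) \<circ> a \<circ> Lop G (Vtx v2)) f)" for f
    using assms(2) unfolding start_supported_def Lop_Vtx by auto
  show "diagonal_off G S (\<lambda>w. 0) (Lop G (Vtx v1) \<circ> a \<circ> Lop G (Vtx v2))"
    unfolding diagonal_off_def
  proof (intro ballI impI)
    fix f assume "f \<in> l2 G" "\<forall>x. pstart G x \<in> S \<longrightarrow> f x = 0"
    then have "Lop G (Vtx v2) f = (\<lambda>x. 0)"
      using assms(3) unfolding Lop_Vtx by (auto intro!: ext)
    then show "(Lop G (Vtx v1) \<circ> a \<circ> Lop G (Vtx v2)) f = (\<lambda>x. 0 * f x)"
      using is_op_zero[OF assms(1)] by (simp add: Lop_Vtx)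
  qed
qed simp

lemma block_diagonal_add_op:
  assumes "block_diagonal G S A" "block_diagonal G S B"
  shows "block_diagonal G S (add_op A B)"
proof -
  obtain cA KA cB KB where A: "\<And>w. cmod (cA w) \<le> KA" "diagonal_off G S cA A"
    and B: "\<And>w. cmod (cB w) \<le> KB" "diagonal_off G S cB B"
    using assms by (meson block_diagonalE)
  show ?thesis
  proof (rule block_diagonalI[where c = "\<lambda>w. cA w + cB w" and K = "KA + KB"])
    show "start_supported G S (add_op A B f)" if "start_supported G S f" for f
      using block_diagonal_start_supported[OF assms(1) that]
        block_diagonal_start_supported[OF assms(2) that]
      unfolding start_supported_def add_op_def by simp
    show "cmod (cA w + cB w) \<le> KA + KB" for w
      using A(1) B(1) by (meson norm_triangle_le add_mono)
    show "diagonal_off G S (\<lambda>w. cA w + cB w) (add_op A B)"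
      using A(2) B(2) unfolding diagonal_off_def add_op_def by (simp add: algebra_simps)
  qed
qed

lemma block_diagonal_smul_op:
  assumes "block_diagonal G S A"
  shows "block_diagonal G S (smul_op z A)"
proof -
  obtain c K where A: "\<And>w. cmod (c w) \<le> K" "diagonal_off G S c A"
    using assms by (meson block_diagonalE)
  show ?thesis
  proof (rule block_diagonalI[where c = "\<lambda>w. z * c w" and K = "cmod z * K"])
    show "start_supported G S (smul_op z A f)" if "start_supported G S f" for f
      using block_diagonal_start_supported[OF assms that]
      unfolding start_supported_def smul_op_def by simp
    show "cmod (z * c w) \<le> cmod z * K" for w
      using A(1) by (simp add: norm_mult mult_left_mono)
    show "diagonal_off G S (\<lambda>w. z * c w) (smul_op z A)"
      using A(2) unfolding diagonal_off_def smul_op_def by (simp add: algebra_simps)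
  qed
qed

lemma block_diagonal_comp:
  assumes "block_diagonal G S A" "block_diagonal G S B"
  shows "block_diagonal G S (A \<circ> B)"
proof -
  obtain cA KA cB KB where A: "\<And>w. cmod (cA w) \<le> KA" "diagonal_off G S cA A"
    and B: "\<And>w. cmod (cB w) \<le> KB" "diagonal_off G S cB B"
    using assms by (meson block_diagonalE)
  show ?thesis
  proof (rule block_diagonalI[where c = "\<lambda>w. cA w * cB w" and K = "KA * KB"])
    show "start_supported G S ((A \<circ> B) f)" if "start_supported G S f" for f
      using assms that by (simp add: block_diagonal_start_supported)
    have "0 \<le> KA" using A(1) norm_ge_zero order_trans by metis
    then show "cmod (cA w * cB w) \<le> KA * KB" for w
      using A(1) B(1) by (simp add: norm_mult mult_mono)
    show "diagonal_off G S (\<lambda>w. cA w * cB w) (A \<circ> B)"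
      unfolding diagonal_off_def
    proof (intro ballI impI)
      fix f assume f: "f \<in> l2 G" "\<forall>x. pstart G x \<in> S \<longrightarrow> f x = 0"
      have Bf: "B f = (\<lambda>x. cB (pstart G x) * f x)" using diagonal_offD[OF B(2)] f by blast
      have "B f \<in> l2 G" unfolding Bf by (rule bounded_mult_in_l2[OF f(1) B(1)])
      then have "A (B f) = (\<lambda>x. cA (pstart G x) * B f x)"
        using diagonal_offD[OF A(2)] f(2) Bf by simp
      then show "(A \<circ> B) f = (\<lambda>x. cA (pstart G x) * cB (pstart G x) * f x)"
        using Bf by (simp add: algebra_simps)
    qed
  qed
qed

lemma block_diagonal_adj:
  assumes "block_diagonal G S A"
  shows "block_diagonal G S (adj G A)"
proof -
  obtain c K where A: "\<And>w. cmod (c w) \<le> K" "diagonal_off G S c A"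
    using assms by (meson block_diagonalE)
  have adj_off: "adj G A f x = f x * cnj (c (pstart G x))"
    if "f \<in> l2 G" "x \<in> FP G" "pstart G x \<notin> S" for f x
    using that diagonal_off_xi[OF A(2)] by (simp add: adj_def linner_scaled_xi)
  show ?thesis
  proof (rule block_diagonalI[where c = "\<lambda>w. cnj (c w)" and K = K])
    show "start_supported G S (adj G A f)" if "start_supported G S f" for f
      using that adj_off unfolding start_supported_def by (auto simp: adj_def)
    show "cmod (cnj (c w)) \<le> K" for w using A(1) by simp
    show "diagonal_off G S (\<lambda>w. cnj (c w)) (adj G A)"
      unfolding diagonal_off_def
    proof (intro ballI impI ext)
      fix f x assume f: "f \<in> l2 G" "\<forall>x. pstart G x \<in> S \<longrightarrow> f x = 0"
      consider "x \<notin> FP G" | "x \<in> FP G" "pstart G x \<notin> S" | "x \<in> FP G" "pstart G x \<in> S"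
        by blast
      then show "adj G A f x = cnj (c (pstart G x)) * f x"
      proof cases
        case 1
        then show ?thesis using f(1) by (simp add: adj_def l2_vanishes_outside)
      next
        case 2
        then show ?thesis using adj_off f(1) by simp
      next
        case 3
        have "start_supported G S (A (xi x))"
          using assms 3 by (simp add: block_diagonal_start_supported start_supported_xi)
        then have "linner f (A (xi x)) = 0"
          using f(2) unfolding start_supported_def by (intro linner_eq_zero) blast
        then show ?thesis using 3 f by (simp add: adj_def)
      qed
    qed
  qed
qed

lemma block_diagonal_star_alg:
  assumes "\<And>A. A \<in> X \<Longrightarrow> block_diagonal G S A" "A \<in> star_alg G X"
  shows "block_diagonal G S A"
  using assms(2)
  by induction (blast intro: assms(1) block_diagonal_add_op block_diagonal_smul_op
      block_diagonal_comp block_diagonal_adj)+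

lemma block_diagonal_corner_algebra:
  assumes "v1 \<in> S" "v2 \<in> S" "A \<in> star_alg G (vertex_ops G \<union> corner G v1 v2)"
  shows "block_diagonal G S A"
proof (rule block_diagonal_star_alg[OF _ assms(3)])
  fix B assume "B \<in> vertex_ops G \<union> corner G v1 v2"
  then show "block_diagonal G S B"
    unfolding vertex_ops_def corner_def Wstar_def wot_closure_def
    using assms(1,2) by (auto intro: block_diagonal_vertex_op block_diagonal_corner_op)
qed

lemma block_diagonal_xi_Vtx_off_diag:
  assumes "block_diagonal G S A" "Vtx u \<in> FP G" "x \<noteq> Vtx u" "pstart G x \<notin> S"
  shows "A (xi (Vtx u)) x = 0"
proof (cases "u \<in> S")
  case True
  then have "start_supported G S (A (xi (Vtx u)))"
    using assms(1,2) by (simp add: block_diagonal_start_supported start_supported_xi)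
  then show ?thesis using assms(4) unfolding start_supported_def by blast
next
  case False
  obtain c K where "diagonal_off G S c A" using assms(1) by (rule block_diagonalE)
  then show ?thesis using diagonal_off_xi[of G S c A "Vtx u"] assms(2,3) False by (simp add: xi_def)
qed

lemma diagonal_off_xi_Vtx_diag:
  "diagonal_off G S c A \<Longrightarrow> Vtx w \<in> FP G \<Longrightarrow> w \<notin> S \<Longrightarrow> A (xi (Vtx w)) (Vtx w) = c w"
  using diagonal_off_xi[of G S c A "Vtx w"] by (simp add: xi_def)

section \<open>Centred elements of the corner algebras\<close>

lemma gen_DG_is_op: "a \<in> gen_DG G X \<Longrightarrow> is_op G a"
  unfolding gen_DG_def wot_closure_def by blast

lemma foldr_comp_eq: "foldr (\<circ>) Ts T = foldr (\<circ>) Ts id \<circ> T"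
  by (induction Ts) auto

lemma foldr_comp_zero: "\<forall>T \<in> set Ts. is_op G T \<Longrightarrow> foldr (\<circ>) Ts id (\<lambda>x. 0) = (\<lambda>x. 0)"
  by (induction Ts) (auto simp: is_op_zero)

lemma wot_closure_approx:
  assumes "a \<in> wot_closure G S0" "finite F" "\<And>f y. (f, y) \<in> F \<Longrightarrow> f \<in> l2 G \<and> y \<in> FP G"
    and "e > 0"
  obtains A where "A \<in> S0" "\<And>f y. (f, y) \<in> F \<Longrightarrow> cmod (a f y - A f y) < e"
proof -
  let ?F = "(\<lambda>(f, y). (f, xi y)) ` F"
  have fin: "finite ?F" using assms(2) by simp
  have sub: "?F \<subseteq> l2 G \<times> l2 G"
  proof
    fix p assume "p \<in> ?F"
    then obtain f y where "(f, y) \<in> F" "p = (f, xi y)" by auto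
    then show "p \<in> l2 G \<times> l2 G" using assms(3) xi_in_l2 by blast
  qed
  have closure: "\<forall>F. finite F \<longrightarrow> F \<subseteq> l2 G \<times> l2 G \<longrightarrow>
      (\<forall>\<epsilon>>0. \<exists>A \<in> S0. \<forall>(f,g) \<in> F. cmod (linner (a f) g - linner (A f) g) < \<epsilon>)"
    using assms(1) unfolding wot_closure_def mem_Collect_eq by (rule conjunct2)
  from closure[rule_format, OF fin sub assms(4)] obtain A
    where A: "A \<in> S0" "\<forall>(f, g) \<in> ?F. cmod (linner (a f) g - linner (A f) g) < e"
    by blast
  have "cmod (a f y - A f y) < e" if "(f, y) \<in> F" for f y
  proof -
    have "(f, xi y) \<in> ?F" by (rule image_eqI[where x = "(f, y)"]) (simp_all add: that)
    from bspec[OF A(2) this] show ?thesis by simp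
  qed
  with A(1) show ?thesis by (rule that)
qed

lemma condE_eq_zero_op_iff:
  assumes "wf_digraph G"
  shows "condE G a = zero_op \<longleftrightarrow> (\<forall>w \<in> verts G. a (xi (Vtx w)) (Vtx w) = 0)"
proof
  assume E: "condE G a = zero_op"
  show "\<forall>w \<in> verts G. a (xi (Vtx w)) (Vtx w) = 0"
  proof
    fix w assume "w \<in> verts G"
    then have "condE G a (xi (Vtx w)) (Vtx w) = a (xi (Vtx w)) (Vtx w)"
      by (simp add: condE_def Vtx_in_FP xi_in_l2) (simp add: xi_def)
    then show "a (xi (Vtx w)) (Vtx w) = 0" using E by (simp add: zero_op_def)
  qed
next
  assume "\<forall>w \<in> verts G. a (xi (Vtx w)) (Vtx w) = 0"
  then show "condE G a = zero_op"
    using pstart_in_verts[OF assms] by (auto simp: condE_def zero_op_def intro!: ext)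
qed

lemma start_supported_centred_corner_xi:
  assumes wf: "wf_digraph G" and S: "v1 \<in> S" "v2 \<in> S"
    and a: "a \<in> gen_DG G (corner G v1 v2)" "condE G a = zero_op" and u: "u \<in> verts G"
  shows "start_supported G S (a (xi (Vtx u)))"
  unfolding start_supported_def
proof (intro allI impI)
  fix x assume x: "x \<notin> FP G \<or> pstart G x \<notin> S"
  have uF: "Vtx u \<in> FP G" by (rule Vtx_in_FP[OF u])
  consider "x \<notin> FP G" | "x = Vtx u" | "x \<in> FP G" "pstart G x \<notin> S" "x \<noteq> Vtx u"
    using x by blast
  then show "a (xi (Vtx u)) x = 0"
  proof cases
    case 1
    then show ?thesis using is_op_vanishes_outside[OF gen_DG_is_op[OF a(1)]] by blast
  next
    case 2
    then show ?thesis using a(2) u by (simp add: condE_eq_zero_op_iff[OF wf])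
  next
    case 3
    have "cmod (a (xi (Vtx u)) x) < e * 1" if "e > 0" for e
    proof -
      obtain A where A: "A \<in> star_alg G (vertex_ops G \<union> corner G v1 v2)"
        "\<And>f y. (f, y) \<in> {(xi (Vtx u), x)} \<Longrightarrow> cmod (a f y - A f y) < e"
        by (rule wot_closure_approx[OF a(1)[unfolded gen_DG_def], where F = "{(xi (Vtx u), x)}"])
          (use xi_in_l2[OF uF] 3 \<open>e > 0\<close> in auto)
      have "A (xi (Vtx u)) x = 0"
        using block_diagonal_xi_Vtx_off_diag[OF block_diagonal_corner_algebra[OF S A(1)] uF] 3
        by blast
      then show ?thesis using A(2)[of "xi (Vtx u)" x] by simp
    qed
    then show ?thesis by (intro norm_less_all_multiples_imp_zero[of 1]) auto
  qed
qed

lemma centred_corner_annihilates: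
  assumes wf: "wf_digraph G" and T: "v3 \<in> T" "v4 \<in> T"
    and b: "b \<in> gen_DG G (corner G v3 v4)" "condE G b = zero_op"
    and g: "g \<in> l2 G" "\<And>x. pstart G x \<in> T \<Longrightarrow> g x = 0"
  shows "b g = (\<lambda>x. 0)"
proof
  fix x
  show "b g x = 0"
  proof (cases "x \<in> FP G")
    case False
    then show ?thesis using is_op_vanishes_outside[OF gen_DG_is_op[OF b(1)]] by blast
  next
    case xF: True
    define w where "w = pstart G x"
    have w: "w \<in> verts G" unfolding w_def by (rule pstart_in_verts[OF wf xF])
    have wF: "Vtx w \<in> FP G" by (rule Vtx_in_FP[OF w])
    have "cmod (b g x) < e * (1 + cmod (g x))" if "e > 0" for e
    proof -
      obtain B where B: "B \<in> star_alg G (vertex_ops G \<union> corner G v3 v4)"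
        "\<And>f y. (f, y) \<in> {(g, x), (xi (Vtx w), Vtx w)} \<Longrightarrow> cmod (b f y - B f y) < e"
        by (rule wot_closure_approx[OF b(1)[unfolded gen_DG_def],
              where F = "{(g, x), (xi (Vtx w), Vtx w)}"])
          (use g(1) xF xi_in_l2[OF wF] wF \<open>e > 0\<close> in auto)
      obtain c K where c: "diagonal_off G T c B"
        using block_diagonal_corner_algebra[OF T B(1)] by (rule block_diagonalE)
      have Bg: "B g x = c w * g x" using diagonal_offD[OF c g(1)] g(2) unfolding w_def by simp
      have "cmod (B g x) \<le> e * cmod (g x)"
      proof (cases "w \<in> T")
        case True
        then show ?thesis using Bg g(2) unfolding w_def by simp
      next
        case False
        have "B (xi (Vtx w)) (Vtx w) = c w" by (rule diagonal_off_xi_Vtx_diag[OF c wF False])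
        moreover have "b (xi (Vtx w)) (Vtx w) = 0" using b(2) w by (simp add: condE_eq_zero_op_iff[OF wf])
        ultimately have "cmod (c w) < e" using B(2)[of "xi (Vtx w)" "Vtx w"] by simp
        then show ?thesis using Bg by (simp add: norm_mult mult_right_mono)
      qed
      then show ?thesis
        using norm_triangle_sub[of "b g x" "B g x"] B(2)[of g x] by (simp add: algebra_simps)
    qed
    then show ?thesis
      by (intro norm_less_all_multiples_imp_zero[of "1 + cmod (g x)"]) (auto simp: add_pos_nonneg)
  qed
qed

lemma centred_corners_product_xi:
  assumes wf: "wf_digraph G" and disj: "{v1, v2} \<inter> {v3, v4} = {}"
    and a: "a \<in> gen_DG G (corner G v1 v2)" "condE G a = zero_op"
    and b: "b \<in> gen_DG G (corner G v3 v4)" "condE G b = zero_op" and u: "u \<in> verts G"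
  shows "b (a (xi (Vtx u))) = (\<lambda>x. 0)"
proof (rule centred_corner_annihilates[OF wf _ _ b])
  show "a (xi (Vtx u)) \<in> l2 G"
    using gen_DG_is_op[OF a(1)] xi_in_l2[OF Vtx_in_FP[OF u]] unfolding is_op_def by blast
  show "a (xi (Vtx u)) x = 0" if "pstart G x \<in> {v3, v4}" for x
    using start_supported_centred_corner_xi[OF wf _ _ a u, of "{v1, v2}"] that disj
    unfolding start_supported_def by auto
qed auto

lemma alternating_centred_product_xi:
  fixes xs :: "(bool \<times> ('v,'e) op) list"
  assumes wf: "wf_digraph G" and disj: "{v1, v2} \<inter> {v3, v4} = {}" and "xs \<noteq> []"
    and alt: "\<forall>i. Suc i < length xs \<longrightarrow> fst (xs ! i) \<noteq> fst (xs ! Suc i)"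
    and mem: "\<forall>(b, a) \<in> set xs.
      a \<in> gen_DG G (if b then corner G v1 v2 else corner G v3 v4) \<and> condE G a = zero_op"
    and u: "u \<in> verts G"
  shows "foldr (\<circ>) (map snd xs) id (xi (Vtx u)) (Vtx u) = 0"
proof -
  obtain ys q where xs: "xs = ys @ [q]" using \<open>xs \<noteq> []\<close> by (metis rev_exhaust)
  show ?thesis
  proof (cases ys rule: rev_cases)
    case Nil
    have "condE G (snd q) = zero_op" using mem xs by (cases q) auto
    then show ?thesis using Nil xs u by (simp add: condE_eq_zero_op_iff[OF wf])
  next
    case (snoc zs p)
    then have xs': "xs = zs @ [p, q]" using xs by simp
    then have "fst p \<noteq> fst q"
      using alt[rule_format, of "length zs"] by (simp add: nth_append)
    have p: "snd p \<in> gen_DG G (if fst p then corner G v1 v2 else corner G v3 v4)"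
      "condE G (snd p) = zero_op"
      using mem xs' by (cases p; auto)+
    have q: "snd q \<in> gen_DG G (if fst q then corner G v1 v2 else corner G v3 v4)"
      "condE G (snd q) = zero_op"
      using mem xs' by (cases q; auto)+
    have "snd p (snd q (xi (Vtx u))) = (\<lambda>x. 0)"
    proof (cases "fst q")
      case True
      then show ?thesis using p q \<open>fst p \<noteq> fst q\<close>
        by (intro centred_corners_product_xi[OF wf disj _ _ _ _ u]) auto
    next
      case False
      have "{v3, v4} \<inter> {v1, v2} = {}" using disj by blast
      then show ?thesis using False p q \<open>fst p \<noteq> fst q\<close>
        by (intro centred_corners_product_xi[OF wf _ _ _ _ _ u]) auto
    qed
    moreover have "foldr (\<circ>) (map snd zs) id (\<lambda>x. 0) = (\<lambda>x. 0)"
      by (rule foldr_comp_zero) (use mem xs' gen_DG_is_op in fastforce)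
    ultimately show ?thesis using xs' by (simp add: foldr_comp_eq[of _ "snd p \<circ> snd q"])
  qed
qed

lemma free_over_DG_corners:
  fixes G :: "('v,'e) pre_digraph"
  assumes wf: "wf_digraph G" and disj: "{v1, v2} \<inter> {v3, v4} = {}"
  shows "free_over_DG G (corner G v1 v2) (corner G v3 v4)"
  unfolding free_over_DG_def
proof (intro allI impI)
  fix xs :: "(bool \<times> ('v,'e) op) list"
  assume ne: "xs \<noteq> []"
    and alt: "\<forall>i. Suc i < length xs \<longrightarrow> fst (xs ! i) \<noteq> fst (xs ! Suc i)"
    and mem: "\<forall>(b, a) \<in> set xs.
      a \<in> gen_DG G (if b then corner G v1 v2 else corner G v3 v4) \<and> condE G a = zero_op"
  have "\<forall>u \<in> verts G. foldr (\<circ>) (map snd xs) id (xi (Vtx u)) (Vtx u) = 0"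
    by (intro ballI alternating_centred_product_xi[OF wf disj ne alt mem])
  then show "condE G (foldr (\<circ>) (map snd xs) id) = zero_op"
    by (simp add: condE_eq_zero_op_iff[OF wf])
qed

theorem mainTheorem5:
  fixes G :: "('v,'e) pre_digraph" and v1 v2 v3 v4 :: 'v
  assumes "wf_digraph G"
    and "countable (verts G)" and "countable (arcs G)"
    and "v1 \<in> verts G" and "v2 \<in> verts G" and "v3 \<in> verts G" and "v4 \<in> verts G"
    and "distinct [v1, v2, v3, v4]"
  shows "free_over_DG G (corner G v1 v2) (corner G v3 v4)"
  by (rule free_over_DG_corners[OF assms(1)]) (use assms(8) in auto)

end
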